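(* Let $(I,T)$ be a transition system with transition relation given as a finite set of top-level conjuncts $T=\{T_1,\dots,T_n\}$, and let $P$ be a safety property with $(I,T)\vdash P$. Consider the following procedure: set $S\leftarrow T$; then for each conjunct $x$ of $T$ in turn (in some order), if $(I,S\setminus\{x\})\vdash P$ then set $S\leftarrow S\setminus\{x\}$; finally return $S$. Then the returned set is a minimal inductive validity core for $(I,T)\vdash P$.
   Context: A transition system $(I,T)$ over a state space $\Sigma$ consists of an initial-state predicate $I:\Sigma\to\mathit{bool}$ and a transition predicate $T:\Sigma\times\Sigma\to\mathit{bool}$. The reachable-state predicate $R$ of $(I,T)$ is the smallest predicate with $\forall s.\, I(s)\Rightarrow R(s)$ and $\forall s,s'.\, R(s)\land T(s,s')\Rightarrow R(s')$. A safety property is a predicate $P:\Sigma\to\mathit{bool}$; we write $(I,T)\vdash P$ if $\forall s.\,R(s)\Rightarrow P(s)$. The transition relation is assumed to be a top-level conjunction $T_1\land\cdots\land T_n$, and $T$ is identified with the set of its top-level conjuncts; for $S\subseteq T$, $S$ also denotes the transition relation given by the conjunction of its elements, and $S\setminus\{x\}$ is $S$ with the conjunct $x$ removed. Given $(I,T)\vdash P$, a set $S\subseteq T$ is an inductive validity core (IVC) for $(I,T)\vdash P$ iff $(I,S)\vdash P$; an IVC $S$ is minimal iff there is no IVC $M$ for $(I,T)\vdash P$ with $M\subsetneq S$. The checks $(I,S\setminus\{x\})\vdash P$ are performed by an exact oracle (the procedure is considered as a mathematical function of its input). *)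

theory Defs
  imports Main
begin

definition conj_rel :: "('s \<Rightarrow> 's \<Rightarrow> bool) set \<Rightarrow> 's \<Rightarrow> 's \<Rightarrow> bool" where
  "conj_rel S = (\<lambda>s s'. \<forall>t\<in>S. t s s')"

inductive reach :: "('s \<Rightarrow> bool) \<Rightarrow> ('s \<Rightarrow> 's \<Rightarrow> bool) \<Rightarrow> 's \<Rightarrow> bool"
  for I :: "'s \<Rightarrow> bool" and T :: "'s \<Rightarrow> 's \<Rightarrow> bool" where
  init: "I s \<Longrightarrow> reach I T s"
| step: "reach I T s \<Longrightarrow> T s s' \<Longrightarrow> reach I T s'"

definition proves :: "('s \<Rightarrow> bool) \<Rightarrow> ('s \<Rightarrow> 's \<Rightarrow> bool) \<Rightarrow> ('s \<Rightarrow> bool) \<Rightarrow> bool" where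
  "proves I T P = (\<forall>s. reach I T s \<longrightarrow> P s)"

definition is_ivc ::
  "('s \<Rightarrow> bool) \<Rightarrow> ('s \<Rightarrow> 's \<Rightarrow> bool) set \<Rightarrow> ('s \<Rightarrow> bool) \<Rightarrow> ('s \<Rightarrow> 's \<Rightarrow> bool) set \<Rightarrow> bool" where
  "is_ivc I T P S = (S \<subseteq> T \<and> proves I (conj_rel S) P)"

definition is_minimal_ivc ::
  "('s \<Rightarrow> bool) \<Rightarrow> ('s \<Rightarrow> 's \<Rightarrow> bool) set \<Rightarrow> ('s \<Rightarrow> bool) \<Rightarrow> ('s \<Rightarrow> 's \<Rightarrow> bool) set \<Rightarrow> bool" where
  "is_minimal_ivc I T P S = (is_ivc I T P S \<and> \<not> (\<exists>M. is_ivc I T P M \<and> M \<subset> S))"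

definition ivc_step ::
  "('s \<Rightarrow> bool) \<Rightarrow> ('s \<Rightarrow> bool) \<Rightarrow> ('s \<Rightarrow> 's \<Rightarrow> bool) set \<Rightarrow> ('s \<Rightarrow> 's \<Rightarrow> bool) \<Rightarrow> ('s \<Rightarrow> 's \<Rightarrow> bool) set" where
  "ivc_step I P S x = (if proves I (conj_rel (S - {x})) P then S - {x} else S)"

definition ivc_proc ::
  "('s \<Rightarrow> bool) \<Rightarrow> ('s \<Rightarrow> 's \<Rightarrow> bool) set \<Rightarrow> ('s \<Rightarrow> bool) \<Rightarrow> ('s \<Rightarrow> 's \<Rightarrow> bool) list \<Rightarrow> ('s \<Rightarrow> 's \<Rightarrow> bool) set" where
  "ivc_proc I T P xs = foldl (ivc_step I P) T xs"

end

theory Submission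
  imports Defs
begin

text \<open>Removing conjuncts only enlarges the transition relation, so proving a property becomes
  harder as the conjunct set shrinks. Consequently, once the procedure keeps a conjunct because
  dropping it breaks the proof, dropping it from any later, smaller set breaks the proof too.
  The returned set is thus an IVC from which no single conjunct can be removed, and by the same
  monotonicity no proper subset of it is an IVC.\<close>

lemma reach_conj_rel_antimono:
  assumes "reach I (conj_rel B) s" and "A \<subseteq> B"
  shows "reach I (conj_rel A) s"
  using assms(1)
proof (induction rule: reach.induct)
  case (init s)
  then show ?case by (rule reach.init)
next
  case (step s s')
  have "conj_rel A s s'"
    using \<open>conj_rel B s s'\<close> \<open>A \<subseteq> B\<close> unfolding conj_rel_def by blast
  with step.IH show ?case by (rule reach.step)
qed

lemma proves_conj_rel_mono:
  "A \<subseteq> B \<Longrightarrow> proves I (conj_rel A) P \<Longrightarrow> proves I (conj_rel B) P"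
  unfolding proves_def using reach_conj_rel_antimono by metis

lemma minimal_ivc_if_no_conjunct_removable:
  assumes "is_ivc I T P S"
    and "\<And>x. x \<in> S \<Longrightarrow> \<not> proves I (conj_rel (S - {x})) P"
  shows "is_minimal_ivc I T P S"
proof -
  have "\<not> is_ivc I T P M" if "M \<subset> S" for M
  proof
    assume "is_ivc I T P M"
    then have M: "proves I (conj_rel M) P" by (simp add: is_ivc_def)
    from \<open>M \<subset> S\<close> obtain x where "x \<in> S" "M \<subseteq> S - {x}" by blast
    with M have "proves I (conj_rel (S - {x})) P" by (blast intro: proves_conj_rel_mono)
    with assms(2) \<open>x \<in> S\<close> show False by blast
  qed
  with assms(1) show ?thesis by (auto simp: is_minimal_ivc_def)
qed

lemma ivc_step_subset: "ivc_step I P S x \<subseteq> S"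
  by (auto simp: ivc_step_def)

lemma proves_ivc_step:
  "proves I (conj_rel S) P \<Longrightarrow> proves I (conj_rel (ivc_step I P S x)) P"
  by (simp add: ivc_step_def)

lemma foldl_ivc_step_invariant:
  assumes "proves I (conj_rel S) P"
  shows "foldl (ivc_step I P) S xs \<subseteq> S
    \<and> proves I (conj_rel (foldl (ivc_step I P) S xs)) P
    \<and> (\<forall>x \<in> set xs \<inter> foldl (ivc_step I P) S xs.
         \<not> proves I (conj_rel (foldl (ivc_step I P) S xs - {x})) P)"
  using assms
proof (induction xs arbitrary: S)
  case Nil
  then show ?case by simp
next
  case (Cons a xs)
  let ?S' = "ivc_step I P S a"
  let ?R = "foldl (ivc_step I P) ?S' xs"
  have "proves I (conj_rel ?S') P"
    using Cons.prems by (rule proves_ivc_step)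
  with Cons.IH have IH: "?R \<subseteq> ?S'" "proves I (conj_rel ?R) P"
    "\<forall>x \<in> set xs \<inter> ?R. \<not> proves I (conj_rel (?R - {x})) P"
    by blast+
  have "?S' \<subseteq> S" by (rule ivc_step_subset)
  have a_kept: "\<not> proves I (conj_rel (?R - {a})) P" if "a \<in> ?R"
  proof
    assume "proves I (conj_rel (?R - {a})) P"
    moreover have "?R - {a} \<subseteq> S - {a}" using IH(1) \<open>?S' \<subseteq> S\<close> by blast
    ultimately have "proves I (conj_rel (S - {a})) P" by (rule proves_conj_rel_mono[rotated])
    then have "a \<notin> ?S'" by (simp add: ivc_step_def)
    with that IH(1) show False by blast
  qed
  show ?case using IH \<open>?S' \<subseteq> S\<close> a_kept by auto
qed

theorem lemma2:
  fixes I :: "'s \<Rightarrow> bool" and P :: "'s \<Rightarrow> bool"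
    and T :: "('s \<Rightarrow> 's \<Rightarrow> bool) set" and xs :: "('s \<Rightarrow> 's \<Rightarrow> bool) list"
  assumes "finite T"
    and "proves I (conj_rel T) P"
    and "distinct xs" and "set xs = T"
  shows "is_minimal_ivc I T P (ivc_proc I T P xs)"
proof (rule minimal_ivc_if_no_conjunct_removable)
  note invariant = foldl_ivc_step_invariant[OF assms(2), of xs, folded ivc_proc_def]
  show "is_ivc I T P (ivc_proc I T P xs)"
    using invariant by (simp add: is_ivc_def)
  show "\<not> proves I (conj_rel (ivc_proc I T P xs - {x})) P" if "x \<in> ivc_proc I T P xs" for x
    using invariant that assms(4) by blast
qed

end
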